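(* In the setting described in the context, for any sequence of constant pairs $(\eta_{n,1},\eta_{n,2})_{n=0}^{n_0}\in\mathbb{C}^{2(n_0+1)}$ the following are equivalent: (1) there exists a solution $\varphi$ on $\mathbb{R}$ of $(P-\lambda)\varphi=0$ with $\varphi=\eta_{n,1}g_n+\eta_{n,2}\bar g_n$ for every $n=0,1,\dots,n_0$; (2) the state $\Psi$ given by $\Psi(n)=(\eta_{n,1},\eta_{n-1,2})^T$ for $1\le n\le n_0$, $\Psi(-\infty)=\eta_{0,1}$, $\Psi(+\infty)=\eta_{n_0,2}$ satisfies $\mathcal{U}\Psi=\Psi$.
   Context: Let $h>0$, $P(h)=-h^2\frac{d^2}{dx^2}+V(x)$ on $\mathbb{R}$ with $V$ continuous and real-valued, and fix $\lambda>0$. Let $n_0\ge2$ and let $g_0,\dots,g_{n_0}$ be solutions of $(P-\lambda)g=0$ on $\mathbb{R}$ such that each pair $(g_n,\bar g_n)$ is a basis of the solution space, the Wronskian $\mathcal{W}(g_n,\bar g_n)$ is independent of $n$, and $(g_{n-1},\bar g_n)$ is linearly independent for each $1\le n\le n_0$. Define $T_n$ ($1\le n\le n_0$) by $(g_{n-1},\bar g_{n-1})T_n=(g_n,\bar g_n)$; then $T_n\in\mathcal{T}:=\{T=(t_{jk})\in SL(2,\mathbb{C}): t_{11}=\overline{t_{22}},\ t_{12}=\overline{t_{21}}\}$. Define $\mathcal{M}:\mathcal{T}\to\mathcal{S}:=\{M\in U(2): m_{11}=m_{22}\ne0\}$ by $\mathcal{M}\begin{pmatrix}p&\bar q\\ q&\bar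 p\end{pmatrix}=\frac1{\bar p}\begin{pmatrix}1&\bar q\\-q&1\end{pmatrix}$ and $U_n:=\mathcal{M}(T_n)$. Set $P_n:=\begin{pmatrix}1&0\\0&0\end{pmatrix}U_n$, $Q_n:=\begin{pmatrix}0&0\\0&1\end{pmatrix}U_n$. A state $\Psi$ consists of $\Psi(n)=(\Psi_1(n),\Psi_2(n))^T\in\mathbb{C}^2$ for $1\le n\le n_0$ and scalars $\Psi(\pm\infty)\in\mathbb{C}$. The evolution $\mathcal{U}$ is: $(\mathcal{U}\Psi)(n)=P_{n+1}\Psi(n+1)+Q_{n-1}\Psi(n-1)$ for $2\le n\le n_0-1$; $(\mathcal{U}\Psi)(-\infty)=(1,0)U_1\Psi(1)$; $(\mathcal{U}\Psi)(+\infty)=(0,1)U_{n_0}\Psi(n_0)$; $(\mathcal{U}\Psi)(1)=P_2\Psi(2)+(0,\Psi_2(1))^T$; $(\mathcal{U}\Psi)(n_0)=(\Psi_1(n_0),0)^T+Q_{n_0-1}\Psi(n_0-1)$. *)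

theory Defs
  imports "HOL-Analysis.Analysis"
begin

text \<open>Solutions of (P - lambda) phi = 0, i.e. -h^2 phi'' + V phi = lambda phi on the real line,
  for complex-valued phi.\<close>
definition is_sol :: "real \<Rightarrow> (real \<Rightarrow> real) \<Rightarrow> real \<Rightarrow> (real \<Rightarrow> complex) \<Rightarrow> bool" where
  "is_sol h V lam phi \<longleftrightarrow>
     (\<exists>phi'. \<forall>x. (phi has_vector_derivative phi' x) (at x) \<and>
        (phi' has_vector_derivative (complex_of_real ((V x - lam) / h\<^sup>2) * phi x)) (at x))"

definition wronskian :: "(real \<Rightarrow> complex) \<Rightarrow> (real \<Rightarrow> complex) \<Rightarrow> real \<Rightarrow> complex" where
  "wronskian f g x = f x * vector_derivative g (at x) - vector_derivative f (at x) * g x"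

definition lin_indep2 :: "(real \<Rightarrow> complex) \<Rightarrow> (real \<Rightarrow> complex) \<Rightarrow> bool" where
  "lin_indep2 f g \<longleftrightarrow> (\<forall>a b. (\<forall>x. a * f x + b * g x = 0) \<longrightarrow> a = 0 \<and> b = 0)"

definition sol_basis :: "real \<Rightarrow> (real \<Rightarrow> real) \<Rightarrow> real \<Rightarrow> (real \<Rightarrow> complex) \<Rightarrow> (real \<Rightarrow> complex) \<Rightarrow> bool" where
  "sol_basis h V lam f g \<longleftrightarrow> is_sol h V lam f \<and> is_sol h V lam g \<and> lin_indep2 f g \<and>
     (\<forall>phi. is_sol h V lam phi \<longrightarrow> (\<exists>a b. \<forall>x. phi x = a * f x + b * g x))"

definition Mmap :: "complex^2^2 \<Rightarrow> complex^2^2" where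
  "Mmap T = (let p = T $ 1 $ 1; q = T $ 2 $ 1 in
     vector [vector [1 / cnj p, cnj q / cnj p], vector [- q / cnj p, 1 / cnj p]])"

definition Pmat :: "complex^2^2 \<Rightarrow> complex^2^2" where
  "Pmat U = (vector [vector [1, 0], vector [0, 0]] :: complex^2^2) ** U"

definition Qmat :: "complex^2^2 \<Rightarrow> complex^2^2" where
  "Qmat U = (vector [vector [0, 0], vector [0, 1]] :: complex^2^2) ** U"

text \<open>A state: interior part (meaningful on {1..n0}, zero elsewhere), value at -infinity,
  value at +infinity.\<close>
type_synonym state = "(nat \<Rightarrow> complex^2) \<times> complex \<times> complex"

definition evol :: "(nat \<Rightarrow> complex^2^2) \<Rightarrow> nat \<Rightarrow> state \<Rightarrow> state" where
  "evol U n0 S = (case S of (Psi, _, _) \<Rightarrow>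
     ((\<lambda>n. if n < 1 \<or> n > n0 then 0
           else if n = 1 then Pmat (U 2) *v Psi 2 + vector [0, Psi 1 $ 2]
           else if n = n0 then vector [Psi n0 $ 1, 0] + Qmat (U (n0 - 1)) *v Psi (n0 - 1)
           else Pmat (U (n + 1)) *v Psi (n + 1) + Qmat (U (n - 1)) *v Psi (n - 1)),
      (U 1 *v Psi 1) $ 1,
      (U n0 *v Psi n0) $ 2))"

definition state_of :: "nat \<Rightarrow> (nat \<Rightarrow> complex) \<Rightarrow> (nat \<Rightarrow> complex) \<Rightarrow> state" where
  "state_of n0 eta1 eta2 =
     ((\<lambda>n. if n < 1 \<or> n > n0 then 0 else vector [eta1 n, eta2 (n - 1)]), eta1 0, eta2 n0)"

end

theory Submission
  imports Defs
begin

text \<open>Since each pair (g n, cnj (g n)) is a basis, a solution with the prescribed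
  coefficients in all bases exists iff consecutive coefficient pairs are related by the
  transfer matrices, (eta1 (n - 1), eta2 (n - 1)) = T n (eta1 n, eta2 n). Conjugating the
  change of basis shows that T n has the shape [[p, cnj q], [q, cnj p]], and comparing the
  Wronskians, which are nonzero by uniqueness for the ODE, gives det (T n) = 1. For such a
  matrix the transfer relation T (a, b) = (a', b') is equivalent to the scattering relation
  M(T) (a, b') = (a', b); and U Psi = Psi says exactly that every U n maps
  (eta1 n, eta2 (n - 1)) to (eta1 (n - 1), eta2 n).\<close>

lemma deriv_le_mult_imp_zero:
  fixes E E' :: "real \<Rightarrow> real"
  assumes "a \<le> b"
    and deriv: "\<And>t. (E has_real_derivative E' t) (at t)"
    and bound: "\<And>t. t \<in> {a..b} \<Longrightarrow> E' t \<le> C * E t"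
    and "E a = 0" and nonneg: "\<And>t. 0 \<le> E t"
  shows "E b = 0"
proof -
  define F where "F t = E t * exp (- C * t)" for t
  have "F b \<le> F a"
  proof (rule DERIV_nonpos_imp_nonincreasing[OF \<open>a \<le> b\<close>])
    fix t assume "a \<le> t" "t \<le> b"
    have "(F has_real_derivative (E' t - C * E t) * exp (- C * t)) (at t)"
      unfolding F_def by (auto intro!: derivative_eq_intros deriv simp: algebra_simps)
    moreover have "(E' t - C * E t) * exp (- C * t) \<le> 0"
      using bound[of t] \<open>a \<le> t\<close> \<open>t \<le> b\<close> by (simp add: mult_nonpos_nonneg)
    ultimately show "\<exists>y. (F has_real_derivative y) (at t) \<and> y \<le> 0" by blast
  qed
  then have "E b \<le> 0"
    using \<open>E a = 0\<close> by (simp add: F_def mult_le_0_iff)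
  with nonneg[of b] show ?thesis by linarith
qed

lemma deriv_abs_le_mult_imp_zero:
  fixes E E' :: "real \<Rightarrow> real"
  assumes deriv: "\<And>t. (E has_real_derivative E' t) (at t)"
    and bound: "\<And>t. t \<in> closed_segment x0 x \<Longrightarrow> \<bar>E' t\<bar> \<le> C * E t"
    and "E x0 = 0" and nonneg: "\<And>t. 0 \<le> E t"
  shows "E x = 0"
proof (cases "x0 \<le> x")
  case True
  show ?thesis
    by (rule deriv_le_mult_imp_zero[where C = C, OF True deriv _ \<open>E x0 = 0\<close> nonneg])
      (use bound in \<open>force simp: closed_segment_eq_real_ivl True\<close>)
next
  case False
  have "E (- (- x)) = 0"
  proof (rule deriv_le_mult_imp_zero[where a = "- x0" and E = "\<lambda>t. E (- t)"
        and E' = "\<lambda>t. - E' (- t)" and C = C])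
    show "((\<lambda>t. E (- t)) has_real_derivative - E' (- t)) (at t)" for t
      using DERIV_chain2[OF deriv DERIV_minus[OF DERIV_ident]] by simp
    show "- E' (- t) \<le> C * E (- t)" if "t \<in> {- x0..- x}" for t
      using bound[of "- t"] that False by (force simp: closed_segment_eq_real_ivl)
  qed (use False \<open>E x0 = 0\<close> nonneg in auto)
  then show ?thesis by simp
qed

text \<open>The energy |w|^2 + |w'|^2 vanishes at x0 and grows at most exponentially.\<close>
lemma linear_ode_zero_initial_imp_zero:
  fixes w w' :: "real \<Rightarrow> complex" and k :: "real \<Rightarrow> real"
  assumes cont: "continuous_on UNIV k"
    and w: "\<And>x. (w has_vector_derivative w' x) (at x)"
    and w': "\<And>x. (w' has_vector_derivative (complex_of_real (k x) * w x)) (at x)"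
    and "w x0 = 0" and "w' x0 = 0"
  shows "w x = 0"
proof -
  define E where "E t = Re (w t * cnj (w t) + w' t * cnj (w' t))" for t
  define D where "D t = w' t * cnj (w t) + w t * cnj (w' t)" for t
  have E_eq: "E t = (cmod (w t))\<^sup>2 + (cmod (w' t))\<^sup>2" for t
    unfolding E_def by (simp flip: complex_norm_square)
  have E_deriv: "(E has_real_derivative Re (complex_of_real (1 + k t) * D t)) (at t)" for t
  proof -
    have "((\<lambda>t. w t * cnj (w t) + w' t * cnj (w' t)) has_vector_derivative
        (w t * cnj (w' t) + w' t * cnj (w t)
          + (w' t * cnj (of_real (k t) * w t) + of_real (k t) * w t * cnj (w' t)))) (at t)"
      by (intro has_vector_derivative_add has_vector_derivative_mult
          has_vector_derivative_cnj w w')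
    from has_field_derivative_Re[OF this] show ?thesis
      unfolding E_def[abs_def] D_def by (simp add: algebra_simps)
  qed
  have D_bound: "cmod (D t) \<le> E t" for t
  proof -
    have "cmod (D t) \<le> 2 * (cmod (w t) * cmod (w' t))"
      using norm_triangle_ineq[of "w' t * cnj (w t)" "w t * cnj (w' t)"]
      by (simp add: D_def norm_mult)
    also have "\<dots> \<le> E t"
      using sum_squares_bound[of "cmod (w t)" "cmod (w' t)"] by (simp add: E_eq)
    finally show ?thesis .
  qed
  obtain C where C: "\<And>t. t \<in> closed_segment x0 x \<Longrightarrow> \<bar>1 + k t\<bar> \<le> C"
  proof -
    have "compact ((\<lambda>t. \<bar>1 + k t\<bar>) ` closed_segment x0 x)"
      by (intro compact_continuous_image continuous_intros continuous_on_subset[OF cont]) auto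
    then have "bounded ((\<lambda>t. \<bar>1 + k t\<bar>) ` closed_segment x0 x)"
      by (rule compact_imp_bounded)
    then obtain C where "\<forall>y \<in> (\<lambda>t. \<bar>1 + k t\<bar>) ` closed_segment x0 x. \<bar>y\<bar> \<le> C"
      unfolding bounded_real by blast
    then show ?thesis
      using that by fastforce
  qed
  have "E x = 0"
  proof (rule deriv_abs_le_mult_imp_zero[OF E_deriv])
    fix t assume t: "t \<in> closed_segment x0 x"
    have "\<bar>Re (complex_of_real (1 + k t) * D t)\<bar> \<le> \<bar>1 + k t\<bar> * cmod (D t)"
      using abs_Re_le_cmod[of "D t"] by (simp add: abs_mult mult_left_mono)
    also have "\<dots> \<le> C * E t"
      using C[OF t] D_bound[of t] by (intro mult_mono) (auto simp: E_eq)
    finally show "\<bar>Re (complex_of_real (1 + k t) * D t)\<bar> \<le> C * E t" .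
  qed (use \<open>w x0 = 0\<close> \<open>w' x0 = 0\<close> in \<open>simp_all add: E_eq\<close>)
  then show ?thesis by (simp add: E_eq add_nonneg_eq_0_iff)
qed

lemma is_sol_lincomb:
  assumes "is_sol h V lam f" "is_sol h V lam g"
  shows "is_sol h V lam (\<lambda>x. a * f x + b * g x)"
proof -
  obtain f' where f: "\<And>x. (f has_vector_derivative f' x) (at x)"
    and f': "\<And>x. (f' has_vector_derivative (complex_of_real ((V x - lam) / h\<^sup>2) * f x)) (at x)"
    using assms(1) unfolding is_sol_def by blast
  obtain g' where g: "\<And>x. (g has_vector_derivative g' x) (at x)"
    and g': "\<And>x. (g' has_vector_derivative (complex_of_real ((V x - lam) / h\<^sup>2) * g x)) (at x)"
    using assms(2) unfolding is_sol_def by blast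
  show ?thesis
    unfolding is_sol_def
  proof (intro exI allI conjI)
    fix x
    show "((\<lambda>x. a * f x + b * g x) has_vector_derivative a * f' x + b * g' x) (at x)"
      by (intro has_vector_derivative_add has_vector_derivative_mult_right f g)
    show "((\<lambda>x. a * f' x + b * g' x) has_vector_derivative
        complex_of_real ((V x - lam) / h\<^sup>2) * (a * f x + b * g x)) (at x)"
    proof (rule has_vector_derivative_eq_rhs)
      show "((\<lambda>x. a * f' x + b * g' x) has_vector_derivative
          a * (complex_of_real ((V x - lam) / h\<^sup>2) * f x)
          + b * (complex_of_real ((V x - lam) / h\<^sup>2) * g x)) (at x)"
        by (intro has_vector_derivative_add has_vector_derivative_mult_right f' g')
    qed (simp add: distrib_left mult.left_commute)
  qed
qed

lemma lin_indep2_coeffs_eq: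
  assumes "lin_indep2 f g" and "\<And>x. a * f x + b * g x = c * f x + d * g x"
  shows "a = c \<and> b = d"
proof -
  have "\<forall>x. (a - c) * f x + (b - d) * g x = 0"
    using assms(2) by (simp add: algebra_simps)
  with assms(1) have "a - c = 0 \<and> b - d = 0"
    unfolding lin_indep2_def by blast
  then show ?thesis by simp
qed

lemma lin_indep2_wronskian_nonzero:
  assumes cont: "continuous_on UNIV V"
    and sol: "is_sol h V lam f1" "is_sol h V lam f2" and indep: "lin_indep2 f1 f2"
  shows "\<exists>x. wronskian f1 f2 x \<noteq> 0"
proof (rule ccontr)
  assume "\<nexists>x. wronskian f1 f2 x \<noteq> 0"
  then have W: "wronskian f1 f2 x = 0" for x by blast
  define k where "k x = (V x - lam) / h\<^sup>2" for x
  have k_cont: "continuous_on UNIV k"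
    unfolding k_def divide_inverse by (intro continuous_intros cont)
  obtain f1' where f1: "\<And>x. (f1 has_vector_derivative f1' x) (at x)"
    and f1': "\<And>x. (f1' has_vector_derivative (complex_of_real (k x) * f1 x)) (at x)"
    using sol(1) unfolding k_def is_sol_def by blast
  obtain f2' where f2: "\<And>x. (f2 has_vector_derivative f2' x) (at x)"
    and f2': "\<And>x. (f2' has_vector_derivative (complex_of_real (k x) * f2 x)) (at x)"
    using sol(2) unfolding k_def is_sol_def by blast
  have "\<exists>x0. f1 x0 \<noteq> 0"
  proof (rule ccontr)
    assume "\<nexists>x0. f1 x0 \<noteq> 0"
    then have "1 * f1 x + 0 * f2 x = 0 * f1 x + 0 * f2 x" for x by simp
    from lin_indep2_coeffs_eq[OF indep this] show False by simp
  qed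
  then obtain x0 where x0: "f1 x0 \<noteq> 0" by blast
  define c where "c = f2 x0 / f1 x0"
  define w where "w x = f2 x - c * f1 x" for x
  define w' where "w' x = f2' x - c * f1' x" for x
  have w: "(w has_vector_derivative w' x) (at x)" for x
    unfolding w_def [abs_def] w'_def
    by (intro has_vector_derivative_diff has_vector_derivative_mult_right f1 f2)
  have w': "(w' has_vector_derivative complex_of_real (k x) * w x) (at x)" for x
    unfolding w_def w'_def [abs_def]
  proof (rule has_vector_derivative_eq_rhs)
    show "((\<lambda>x. f2' x - c * f1' x) has_vector_derivative
        complex_of_real (k x) * f2 x - c * (complex_of_real (k x) * f1 x)) (at x)"
      by (intro has_vector_derivative_diff has_vector_derivative_mult_right f1' f2')
  qed (simp add: algebra_simps)
  have c: "c * f1 x0 = f2 x0"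
    using x0 by (simp add: c_def)
  then have "w x0 = 0"
    by (simp add: w_def)
  moreover have "w' x0 = 0"
  proof -
    have "w' x0 * f1 x0 = f1 x0 * f2' x0 - f1' x0 * (c * f1 x0)"
      by (simp add: w'_def algebra_simps)
    also have "\<dots> = wronskian f1 f2 x0"
      by (simp add: c wronskian_def vector_derivative_at[OF f1] vector_derivative_at[OF f2])
    finally show ?thesis
      using x0 W[of x0] by simp
  qed
  ultimately have "w x = 0" for x
    by (rule linear_ode_zero_initial_imp_zero[OF k_cont w w'])
  then have "c * f1 x + 0 * f2 x = 0 * f1 x + 1 * f2 x" for x by (simp add: w_def)
  from lin_indep2_coeffs_eq[OF indep this] show False by simp
qed

lemma wronskian_lincomb:
  assumes f1: "\<And>x. (f1 has_vector_derivative f1' x) (at x)"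
    and f2: "\<And>x. (f2 has_vector_derivative f2' x) (at x)"
  shows "wronskian (\<lambda>x. \<alpha> * f1 x + \<beta> * f2 x) (\<lambda>x. \<gamma> * f1 x + \<delta> * f2 x) x
       = (\<alpha> * \<delta> - \<beta> * \<gamma>) * wronskian f1 f2 x"
proof -
  have lincomb_deriv: "vector_derivative (\<lambda>x. a * f1 x + b * f2 x) (at x) = a * f1' x + b * f2' x"
    for a b
    by (intro vector_derivative_at has_vector_derivative_add has_vector_derivative_mult_right f1 f2)
  show ?thesis
    unfolding wronskian_def lincomb_deriv vector_derivative_at[OF f1] vector_derivative_at[OF f2]
    by (simp add: algebra_simps)
qed

lemma vector2_eq_iff: "(vector [a, b] :: 'a::zero^2) = vector [c, d] \<longleftrightarrow> a = c \<and> b = d"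
  by (simp add: vec_eq_iff forall_2)

lemma matrix_vector_mult_vector2:
  fixes T :: "'a::comm_semiring_1^2^2"
  shows "T *v vector [a, b] = vector [T $ 1 $ 1 * a + T $ 1 $ 2 * b, T $ 2 $ 1 * a + T $ 2 $ 2 * b]"
  by (simp add: vec_eq_iff forall_2 matrix_vector_mult_def sum_2)

definition su11 :: "complex^2^2 \<Rightarrow> bool" where
  "su11 T \<longleftrightarrow> T $ 2 $ 2 = cnj (T $ 1 $ 1) \<and> T $ 1 $ 2 = cnj (T $ 2 $ 1) \<and> det T = 1"

lemma su11_scattering_iff_transfer:
  assumes "su11 T"
  shows "Mmap T *v vector [a, b'] = vector [a', b] \<longleftrightarrow> T *v vector [a, b] = vector [a', b']"
proof -
  define p q where "p = T $ 1 $ 1" and "q = T $ 2 $ 1"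
  have T: "T $ 1 $ 2 = cnj q" "T $ 2 $ 2 = cnj p"
    using assms by (simp_all add: su11_def p_def q_def)
  have "p * cnj p - cnj q * q = 1"
    using assms det_2[of T] by (simp add: su11_def T flip: p_def q_def)
  then have det: "p * cnj p = 1 + q * cnj q"
    by (simp add: algebra_simps eq_diff_eq)
  have "cnj p \<noteq> 0"
  proof
    assume "cnj p = 0"
    then have "complex_of_real (1 + (cmod q)\<^sup>2) = 0"
      using det by (simp only: of_real_add of_real_1 complex_norm_square) simp
    then have "1 + (cmod q)\<^sup>2 = 0"
      by (simp only: of_real_eq_0_iff)
    then show False
      by (smt (verit) zero_le_power2)
  qed
  have Mmap: "Mmap T *v vector [a, b'] = vector [(a + cnj q * b') / cnj p, (b' - q * a) / cnj p]"
    by (simp add: Mmap_def Let_def matrix_vector_mult_vector2 p_def q_def add_divide_distrib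
        diff_divide_distrib)
  have T_mult: "T *v vector [a, b] = vector [p * a + cnj q * b, q * a + cnj p * b]"
    by (simp add: matrix_vector_mult_vector2 T flip: p_def q_def)
  have second: "(b' - q * a) / cnj p = b \<longleftrightarrow> b' = q * a + cnj p * b"
    using \<open>cnj p \<noteq> 0\<close> by (auto simp: field_simps)
  have first: "(a + cnj q * b') / cnj p = p * a + cnj q * b" if "b' = q * a + cnj p * b"
  proof -
    have "a + cnj q * b' = cnj p * (p * a + cnj q * b)"
      using that det by (simp add: algebra_simps)
    with \<open>cnj p \<noteq> 0\<close> show ?thesis by simp
  qed
  show ?thesis
    unfolding Mmap T_mult vector2_eq_iff using first second by auto
qed

lemma Pmat_mult_vector: "(Pmat U *v v) $ 1 = (U *v v) $ 1" "(Pmat U *v v) $ 2 = 0"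
  unfolding Pmat_def matrix_vector_mul_assoc[symmetric]
  by (simp_all add: matrix_vector_mult_def sum_2)

lemma Qmat_mult_vector: "(Qmat U *v v) $ 1 = 0" "(Qmat U *v v) $ 2 = (U *v v) $ 2"
  unfolding Qmat_def matrix_vector_mul_assoc[symmetric]
  by (simp_all add: matrix_vector_mult_def sum_2)

lemma evol_interior:
  assumes "2 \<le> n0" "n \<in> {1..n0}"
  shows "fst (evol U n0 (Psi, a, b)) n $ 1 =
      (if n = n0 then Psi n0 $ 1 else (U (Suc n) *v Psi (Suc n)) $ 1)"
    and "fst (evol U n0 (Psi, a, b)) n $ 2 =
      (if n = 1 then Psi 1 $ 2 else (U (n - 1) *v Psi (n - 1)) $ 2)"
  using assms by (auto simp: evol_def Pmat_mult_vector Qmat_mult_vector numeral_2_eq_2)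

lemma evol_exterior: "n \<notin> {1..n0} \<Longrightarrow> fst (evol U n0 (Psi, a, b)) n = 0"
  by (auto simp: evol_def)

lemma evol_ends:
  "fst (snd (evol U n0 (Psi, a, b))) = (U 1 *v Psi 1) $ 1"
  "snd (snd (evol U n0 (Psi, a, b))) = (U n0 *v Psi n0) $ 2"
  by (simp_all add: evol_def)

lemma ball_shift_iff:
  fixes P Q :: "nat \<Rightarrow> bool"
  assumes "1 \<le> n0"
  shows "(\<forall>n\<in>{1..n0}. (n \<noteq> n0 \<longrightarrow> P (Suc n)) \<and> (n \<noteq> 1 \<longrightarrow> Q (n - 1))) \<and> P 1 \<and> Q n0
      \<longleftrightarrow> (\<forall>m\<in>{1..n0}. P m \<and> Q m)" (is "?shifted \<longleftrightarrow> ?all")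
proof
  assume ?shifted
  then have shift: "\<forall>n\<in>{1..n0}. (n \<noteq> n0 \<longrightarrow> P (Suc n)) \<and> (n \<noteq> 1 \<longrightarrow> Q (n - 1))"
    and "P 1" "Q n0" by auto
  show ?all
  proof
    fix m assume m: "m \<in> {1..n0}"
    have "P m"
    proof (cases "m = 1")
      case False
      then have "m - 1 \<in> {1..n0}" "m - 1 \<noteq> n0" "Suc (m - 1) = m"
        using m by auto
      then show ?thesis
        using shift by metis
    qed (use \<open>P 1\<close> in simp)
    moreover have "Q m"
    proof (cases "m = n0")
      case False
      then have "Suc m \<in> {1..n0}" "Suc m \<noteq> 1" "Suc m - 1 = m"
        using m by auto
      then show ?thesis
        using shift by metis
    qed (use \<open>Q n0\<close> in simp)
    ultimately show "P m \<and> Q m" ..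
  qed
next
  assume all: ?all
  show ?shifted
  proof (intro conjI ballI impI)
    fix n assume n: "n \<in> {1..n0}"
    show "P (Suc n)" if "n \<noteq> n0"
    proof -
      have "Suc n \<in> {1..n0}" using n that by auto
      with all show ?thesis by blast
    qed
    show "Q (n - 1)" if "n \<noteq> 1"
    proof -
      have "n - 1 \<in> {1..n0}" using n that by auto
      with all show ?thesis by blast
    qed
  qed (use all assms in auto)
qed

lemma evol_state_of_eq_iff:
  assumes "2 \<le> n0"
  shows "evol U n0 (state_of n0 e1 e2) = state_of n0 e1 e2 \<longleftrightarrow>
    (\<forall>m\<in>{1..n0}. U m *v vector [e1 m, e2 (m - 1)] = vector [e1 (m - 1), e2 m])"
proof -
  define Psi where "Psi = fst (state_of n0 e1 e2)"
  have S: "state_of n0 e1 e2 = (Psi, e1 0, e2 n0)"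
    by (simp add: Psi_def state_of_def)
  have Psi: "Psi m = vector [e1 m, e2 (m - 1)]" if "m \<in> {1..n0}" for m
    using that by (auto simp: Psi_def state_of_def)
  have Psi_exterior: "Psi n = 0" if "n \<notin> {1..n0}" for n
    using that by (auto simp: Psi_def state_of_def)
  have "evol U n0 (Psi, e1 0, e2 n0) = (Psi, e1 0, e2 n0) \<longleftrightarrow>
      fst (evol U n0 (Psi, e1 0, e2 n0)) = Psi
      \<and> (U 1 *v Psi 1) $ 1 = e1 0 \<and> (U n0 *v Psi n0) $ 2 = e2 n0"
    by (simp add: prod_eq_iff evol_ends)
  also have "fst (evol U n0 (Psi, e1 0, e2 n0)) = Psi \<longleftrightarrow>
      (\<forall>n\<in>{1..n0}. fst (evol U n0 (Psi, e1 0, e2 n0)) n = Psi n)"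
    using Psi_exterior evol_exterior by (metis ext)
  also have "\<dots> \<longleftrightarrow> (\<forall>n\<in>{1..n0}. (n \<noteq> n0 \<longrightarrow> (U (Suc n) *v Psi (Suc n)) $ 1 = e1 n)
      \<and> (n \<noteq> 1 \<longrightarrow> (U (n - 1) *v Psi (n - 1)) $ 2 = e2 (n - 1)))"
  proof (rule ball_cong[OF refl])
    fix n assume n: "n \<in> {1..n0}"
    have "Psi 1 $ 2 = e2 0" "Psi n0 $ 1 = e1 n0"
      using assms by (simp_all add: Psi)
    then show "fst (evol U n0 (Psi, e1 0, e2 n0)) n = Psi n \<longleftrightarrow>
        (n \<noteq> n0 \<longrightarrow> (U (Suc n) *v Psi (Suc n)) $ 1 = e1 n)
        \<and> (n \<noteq> 1 \<longrightarrow> (U (n - 1) *v Psi (n - 1)) $ 2 = e2 (n - 1))"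
      using assms n by (auto simp: vec_eq_iff forall_2 evol_interior Psi)
  qed
  also have "\<dots> \<and> (U 1 *v Psi 1) $ 1 = e1 0 \<and> (U n0 *v Psi n0) $ 2 = e2 n0 \<longleftrightarrow>
      (\<forall>m\<in>{1..n0}. (U m *v Psi m) $ 1 = e1 (m - 1) \<and> (U m *v Psi m) $ 2 = e2 m)"
    using ball_shift_iff[of n0 "\<lambda>m. (U m *v Psi m) $ 1 = e1 (m - 1)" "\<lambda>m. (U m *v Psi m) $ 2 = e2 m"]
      assms by simp
  also have "\<dots> \<longleftrightarrow> (\<forall>m\<in>{1..n0}. U m *v vector [e1 m, e2 (m - 1)] = vector [e1 (m - 1), e2 m])"
    by (intro ball_cong refl) (simp add: Psi vec_eq_iff forall_2)
  finally show ?thesis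
    by (simp only: S)
qed

lemma basis_change_lincomb:
  fixes T :: "'a::comm_ring_1^2^2"
  assumes "f' x = f x * T $ 1 $ 1 + g x * T $ 2 $ 1" and "g' x = f x * T $ 1 $ 2 + g x * T $ 2 $ 2"
  shows "a * f' x + b * g' x = (T *v vector [a, b]) $ 1 * f x + (T *v vector [a, b]) $ 2 * g x"
  using assms by (simp add: matrix_vector_mult_vector2 algebra_simps)

lemma transfer_matrix_su11:
  assumes cont: "continuous_on UNIV V"
    and basis: "sol_basis h V lam f (\<lambda>x. cnj (f x))"
    and wr: "\<And>x. wronskian f' (\<lambda>x. cnj (f' x)) x = wronskian f (\<lambda>x. cnj (f x)) x"
    and T: "\<And>x. f' x = f x * T $ 1 $ 1 + cnj (f x) * T $ 2 $ 1
      \<and> cnj (f' x) = f x * T $ 1 $ 2 + cnj (f x) * T $ 2 $ 2"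
  shows "su11 T"
proof -
  have sol: "is_sol h V lam f" "is_sol h V lam (\<lambda>x. cnj (f x))"
    and indep: "lin_indep2 f (\<lambda>x. cnj (f x))"
    using basis by (simp_all add: sol_basis_def)
  have "cnj (T $ 2 $ 1) * f x + cnj (T $ 1 $ 1) * cnj (f x) = T $ 1 $ 2 * f x + T $ 2 $ 2 * cnj (f x)"
    for x
  proof -
    have "cnj (T $ 2 $ 1) * f x + cnj (T $ 1 $ 1) * cnj (f x) = cnj (f x * T $ 1 $ 1 + cnj (f x) * T $ 2 $ 1)"
      by (simp add: algebra_simps)
    also have "\<dots> = cnj (f' x)"
      using conjunct1[OF T[of x]] by simp
    also have "\<dots> = T $ 1 $ 2 * f x + T $ 2 $ 2 * cnj (f x)"
      using conjunct2[OF T[of x]] by (simp add: mult.commute)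
    finally show ?thesis .
  qed
  from lin_indep2_coeffs_eq[OF indep this]
  have conj: "T $ 1 $ 2 = cnj (T $ 2 $ 1)" "T $ 2 $ 2 = cnj (T $ 1 $ 1)" by simp_all
  obtain d where d: "\<And>x. (f has_vector_derivative d x) (at x)"
    using sol(1) unfolding is_sol_def by blast
  obtain d' where d': "\<And>x. ((\<lambda>x. cnj (f x)) has_vector_derivative d' x) (at x)"
    using sol(2) unfolding is_sol_def by blast
  have "wronskian f' (\<lambda>x. cnj (f' x)) x = det T * wronskian f (\<lambda>x. cnj (f x)) x" for x
  proof -
    have f': "f' = (\<lambda>x. T $ 1 $ 1 * f x + T $ 2 $ 1 * cnj (f x))"
      using conjunct1[OF T] by (simp add: fun_eq_iff mult.commute)
    have cnj_f': "(\<lambda>x. cnj (f' x)) = (\<lambda>x. T $ 1 $ 2 * f x + T $ 2 $ 2 * cnj (f x))"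
      using conjunct2[OF T] by (simp add: fun_eq_iff mult.commute)
    show ?thesis
      unfolding cnj_f' unfolding f' wronskian_lincomb[OF d d'] det_2 by (simp add: algebra_simps)
  qed
  moreover obtain x0 where "wronskian f (\<lambda>x. cnj (f x)) x0 \<noteq> 0"
    using lin_indep2_wronskian_nonzero[OF cont sol indep] by blast
  ultimately have "det T = 1"
    using wr[of x0] by simp
  with conj show ?thesis
    by (simp add: su11_def)
qed

lemma exists_solution_with_coefficients_iff:
  fixes g :: "nat \<Rightarrow> real \<Rightarrow> complex" and T :: "nat \<Rightarrow> complex^2^2"
  assumes basis: "\<And>n. n \<le> n0 \<Longrightarrow> sol_basis h V lam (g n) (\<lambda>x. cnj (g n x))"
    and T: "\<And>n x. 1 \<le> n \<Longrightarrow> n \<le> n0 \<Longrightarrow>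
          g n x = g (n - 1) x * T n $ 1 $ 1 + cnj (g (n - 1) x) * T n $ 2 $ 1 \<and>
          cnj (g n x) = g (n - 1) x * T n $ 1 $ 2 + cnj (g (n - 1) x) * T n $ 2 $ 2"
  shows "(\<exists>phi. is_sol h V lam phi \<and>
            (\<forall>n \<le> n0. \<forall>x. phi x = eta1 n * g n x + eta2 n * cnj (g n x)))
      \<longleftrightarrow> (\<forall>m\<in>{1..n0}. T m *v vector [eta1 m, eta2 m] = vector [eta1 (m - 1), eta2 (m - 1)])"
    (is "(\<exists>phi. _ \<and> (\<forall>n \<le> n0. \<forall>x. phi x = ?expansion n x)) \<longleftrightarrow> _")
proof -
  have step: "(\<forall>x. ?expansion m x = ?expansion (m - 1) x)
      \<longleftrightarrow> T m *v vector [eta1 m, eta2 m] = vector [eta1 (m - 1), eta2 (m - 1)]"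
    if m: "m \<in> {1..n0}" for m
  proof -
    define v where "v = T m *v vector [eta1 m, eta2 m]"
    have expansion: "?expansion m x = v $ 1 * g (m - 1) x + v $ 2 * cnj (g (m - 1) x)" for x
      using T[of m x] m unfolding v_def by (intro basis_change_lincomb) auto
    have "m - 1 \<le> n0"
      using m by auto
    then have indep: "lin_indep2 (g (m - 1)) (\<lambda>x. cnj (g (m - 1) x))"
      using basis by (simp add: sol_basis_def)
    have "(\<forall>x. ?expansion m x = ?expansion (m - 1) x) \<longleftrightarrow> v $ 1 = eta1 (m - 1) \<and> v $ 2 = eta2 (m - 1)"
    proof
      assume "\<forall>x. ?expansion m x = ?expansion (m - 1) x"
      then show "v $ 1 = eta1 (m - 1) \<and> v $ 2 = eta2 (m - 1)"
        by (intro lin_indep2_coeffs_eq[OF indep]) (simp add: expansion)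
    qed (simp add: expansion)
    then show ?thesis
      by (simp add: v_def vec_eq_iff forall_2)
  qed
  have "(\<exists>phi. is_sol h V lam phi \<and> (\<forall>n \<le> n0. \<forall>x. phi x = ?expansion n x))
      \<longleftrightarrow> (\<forall>m\<in>{1..n0}. \<forall>x. ?expansion m x = ?expansion (m - 1) x)"
  proof
    assume "\<exists>phi. is_sol h V lam phi \<and> (\<forall>n \<le> n0. \<forall>x. phi x = ?expansion n x)"
    then obtain phi where phi: "\<forall>n \<le> n0. \<forall>x. phi x = ?expansion n x"
      by blast
    show "\<forall>m\<in>{1..n0}. \<forall>x. ?expansion m x = ?expansion (m - 1) x"
    proof (intro ballI allI)
      fix m x assume "m \<in> {1..n0}"
      then have "m \<le> n0" "m - 1 \<le> n0"
        by auto
      then show "?expansion m x = ?expansion (m - 1) x"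
        using phi by metis
    qed
  next
    assume consecutive: "\<forall>m\<in>{1..n0}. \<forall>x. ?expansion m x = ?expansion (m - 1) x"
    have same: "\<forall>x. ?expansion n x = ?expansion 0 x" if "n \<le> n0" for n
      using that
    proof (induction n)
      case (Suc n)
      then show ?case
        using consecutive[rule_format, of "Suc n"] by simp
    qed simp
    have "is_sol h V lam (?expansion 0)"
      using basis[of 0] by (intro is_sol_lincomb) (simp_all add: sol_basis_def)
    moreover have "\<forall>n \<le> n0. \<forall>x. ?expansion 0 x = ?expansion n x"
      using same by metis
    ultimately show "\<exists>phi. is_sol h V lam phi \<and> (\<forall>n \<le> n0. \<forall>x. phi x = ?expansion n x)"
      by blast
  qed
  also have "\<dots> \<longleftrightarrow> (\<forall>m\<in>{1..n0}. T m *v vector [eta1 m, eta2 m] = vector [eta1 (m - 1), eta2 (m - 1)])"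
    using step by (rule ball_cong[OF refl])
  finally show ?thesis .
qed

theorem mainTheorem4:
  fixes h lam :: real and V :: "real \<Rightarrow> real" and n0 :: nat
    and g :: "nat \<Rightarrow> real \<Rightarrow> complex" and T :: "nat \<Rightarrow> complex^2^2"
    and eta1 eta2 :: "nat \<Rightarrow> complex"
  assumes h_pos: "h > 0" and lam_pos: "lam > 0" and V_cont: "continuous_on UNIV V"
    and n0: "n0 \<ge> 2"
    and basis: "\<And>n. n \<le> n0 \<Longrightarrow> sol_basis h V lam (g n) (\<lambda>x. cnj (g n x))"
    and wr: "\<And>n x. n \<le> n0 \<Longrightarrow>
          wronskian (g n) (\<lambda>x. cnj (g n x)) x = wronskian (g 0) (\<lambda>x. cnj (g 0 x)) x"
    and indep: "\<And>n. 1 \<le> n \<Longrightarrow> n \<le> n0 \<Longrightarrow> lin_indep2 (g (n - 1)) (\<lambda>x. cnj (g n x))"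
    and T_def: "\<And>n x. 1 \<le> n \<Longrightarrow> n \<le> n0 \<Longrightarrow>
          g n x = g (n - 1) x * T n $ 1 $ 1 + cnj (g (n - 1) x) * T n $ 2 $ 1 \<and>
          cnj (g n x) = g (n - 1) x * T n $ 1 $ 2 + cnj (g (n - 1) x) * T n $ 2 $ 2"
  shows "(\<exists>phi. is_sol h V lam phi \<and>
            (\<forall>n \<le> n0. \<forall>x. phi x = eta1 n * g n x + eta2 n * cnj (g n x)))
         \<longleftrightarrow> evol (\<lambda>n. Mmap (T n)) n0 (state_of n0 eta1 eta2) = state_of n0 eta1 eta2"
proof -
  have su11: "su11 (T m)" if m: "m \<in> {1..n0}" for m
  proof (rule transfer_matrix_su11[OF V_cont basis[of "m - 1"]])
    show "m - 1 \<le> n0"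
      using m by auto
    show "wronskian (g m) (\<lambda>x. cnj (g m x)) x = wronskian (g (m - 1)) (\<lambda>x. cnj (g (m - 1) x)) x"
      for x using m wr[of m x] wr[of "m - 1" x] by auto
    show "g m x = g (m - 1) x * T m $ 1 $ 1 + cnj (g (m - 1) x) * T m $ 2 $ 1
        \<and> cnj (g m x) = g (m - 1) x * T m $ 1 $ 2 + cnj (g (m - 1) x) * T m $ 2 $ 2" for x
      using m by (intro T_def) auto
  qed
  have "(\<exists>phi. is_sol h V lam phi \<and>
            (\<forall>n \<le> n0. \<forall>x. phi x = eta1 n * g n x + eta2 n * cnj (g n x)))
      \<longleftrightarrow> (\<forall>m\<in>{1..n0}. T m *v vector [eta1 m, eta2 m] = vector [eta1 (m - 1), eta2 (m - 1)])"
    by (rule exists_solution_with_coefficients_iff[where g = g and T = T, OF basis T_def])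
  also have "\<dots> \<longleftrightarrow>
      (\<forall>m\<in>{1..n0}. Mmap (T m) *v vector [eta1 m, eta2 (m - 1)] = vector [eta1 (m - 1), eta2 m])"
    using su11 su11_scattering_iff_transfer by (intro ball_cong) auto
  also have "\<dots> \<longleftrightarrow> evol (\<lambda>n. Mmap (T n)) n0 (state_of n0 eta1 eta2) = state_of n0 eta1 eta2"
    using evol_state_of_eq_iff[OF n0] by simp
  finally show ?thesis .
qed

end
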